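(* In the K-AVG algorithm (described in the context), fix an outer iteration $n$ and write $\gamma=\gamma_n$, $B=B_n$. Suppose that for some $0<\delta<1$, $$1\ \ge\ \frac{L^2\gamma^2(K+1)(K-2)}{2}+L\gamma K\qquad\text{and}\qquad 1-\delta\ \ge\ L^2\gamma^2 .$$ Then, conditionally on $\widetilde w_n$, $$\mathbb{E}\big[F(\widetilde w_{n+1})\,\big|\,\widetilde w_n\big]-F(\widetilde w_n)\ \le\ -\frac{(K-1+\delta)\gamma}{2}\big\|\nabla F(\widetilde w_n)\big\|_2^2+\frac{L\gamma^2KM}{2B}\Big(\frac KP+\frac{L(2K-1)(K-1)\gamma}{6}\Big).$$
   Context: Let $F:\mathbb{R}^d\to\mathbb{R}$ be continuously differentiable with $L$-Lipschitz gradient ($L>0$): $\|\nabla F(w)-\nabla F(w')\|_2\le L\|w-w'\|_2$ for all $w,w'$. Let $\xi$ be a random variable and $(w,\xi)\mapsto\nabla F(w;\xi)\in\mathbb{R}^d$ a stochastic gradient satisfying, for every fixed $w$, $\mathbb{E}_\xi\nabla F(w;\xi)=\nabla F(w)$ and $\mathbb{E}_\xi\|\nabla F(w;\xi)\|_2^2-\|\mathbb{E}_\xi\nabla F(w;\xi)\|_2^2\le M$ for a constant $M\ge0$. K-AVG algorithm with $P\ge1$ processors, delay $K\ge1$, stepsizes $\gamma_n>0$ and batch sizes $B_n\ge1$: start from a deterministic $\widetilde w_1\in\mathbb{R}^d$. For $n=1,2,\dots$: each processor $j=1,\dots,P$ sets $w^j_{n,0}=\widetilde w_n$ and for $k=1,\dots,K$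 updates $w^j_{n,k}=w^j_{n,k-1}-\frac{\gamma_n}{B_n}\sum_{s=1}^{B_n}\nabla F(w^j_{n,k-1};\xi^j_{n,k,s})$; then $\widetilde w_{n+1}=\frac1P\sum_{j=1}^P w^j_{n,K}$. All samples $\xi^j_{n,k,s}$ (over all $n,j,k,s$) are i.i.d. copies of $\xi$. It is assumed that there is a scalar $F^*$ with $F\ge F^*$ on an open set containing all iterates (in particular $F(\widetilde w_n)\ge F^*$ for all $n$). $\mathbb{E}$ denotes total expectation over all samples. *)

theory Defs
  imports "HOL-Probability.Probability"
begin

text \<open>Samples are indexed by (j,k,s) with j < P (processor), 1 <= k <= K (local step),
  s < B (mini-batch element).  G v xi is the stochastic gradient at v for sample xi.\<close>

fun kavg_local ::
  "('a::real_vector \<Rightarrow> 'b \<Rightarrow> 'a) \<Rightarrow> real \<Rightarrow> nat \<Rightarrow> 'a \<Rightarrow> (nat \<times> nat \<times> nat \<Rightarrow> 'b) \<Rightarrow> nat \<Rightarrow> nat \<Rightarrow> 'a"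
where
  "kavg_local G \<gamma> B w x j 0 = w"
| "kavg_local G \<gamma> B w x j (Suc k) =
     kavg_local G \<gamma> B w x j k
     - (\<gamma> / real B) *\<^sub>R (\<Sum>s<B. G (kavg_local G \<gamma> B w x j k) (x (j, Suc k, s)))"

definition kavg_step ::
  "('a::real_vector \<Rightarrow> 'b \<Rightarrow> 'a) \<Rightarrow> real \<Rightarrow> nat \<Rightarrow> nat \<Rightarrow> nat \<Rightarrow> 'a \<Rightarrow> (nat \<times> nat \<times> nat \<Rightarrow> 'b) \<Rightarrow> 'a"
where
  "kavg_step G \<gamma> B K P w x = (1 / real P) *\<^sub>R (\<Sum>j<P. kavg_local G \<gamma> B w x j K)"

definition kavg_index :: "nat \<Rightarrow> nat \<Rightarrow> nat \<Rightarrow> (nat \<times> nat \<times> nat) set" where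
  "kavg_index P K B = {..<P} \<times> {1..K} \<times> {..<B}"

end

theory Submission
  imports Defs
begin

text \<open>By the descent lemma, \<open>E F(w + d) - F w \<le> \<nabla>F(w) \<bullet> E d + L/2 E|d|\<^sup>2\<close> for the averaged displacement
  \<open>d = -(\<gamma>/P) \<Sum>\<^sub>j \<Sum>\<^sub>k g\<^sub>j\<^sub>k\<close>, where \<open>g\<^sub>j\<^sub>k\<close> is the minibatch gradient with which processor \<open>j\<close> leaves its
  local iterate \<open>w\<^sub>j\<^sub>k\<close>. Conditionally on the samples of the earlier local steps, \<open>g\<^sub>j\<^sub>k\<close> has mean
  \<open>\<nabla>F(w\<^sub>j\<^sub>k)\<close> and second moment at most \<open>|\<nabla>F(w\<^sub>j\<^sub>k)|\<^sup>2 + M/B\<close>. The first order term is then bounded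
  by polarization, \<open>\<nabla>F(w) \<bullet> \<nabla>F(v) \<ge> (|\<nabla>F(w)|\<^sup>2 + |\<nabla>F(v)|\<^sup>2 - L\<^sup>2|v - w|\<^sup>2)/2\<close>, and in the second
  order term the contributions of different processors are uncorrelated because they use disjoint
  samples. What remains are the drifts \<open>E|w\<^sub>j\<^sub>k - w|\<^sup>2 \<le> \<gamma>\<^sup>2 k \<Sum>\<^sub>i\<^sub><\<^sub>k E|g\<^sub>j\<^sub>i|\<^sup>2\<close>. The step size conditions
  make the total coefficient of every \<open>E|\<nabla>F(w\<^sub>j\<^sub>k)|\<^sup>2\<close> with \<open>k \<ge> 1\<close> nonpositive and that of
  \<open>|\<nabla>F(w)|\<^sup>2\<close> at most \<open>-(K - 1 + \<delta>)\<gamma>/2\<close>.\<close>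

lemma norm_sum_squared_le:
  fixes f :: "nat \<Rightarrow> 'a::real_normed_vector"
  shows "(norm (\<Sum>i<n. f i))\<^sup>2 \<le> real n * (\<Sum>i<n. (norm (f i))\<^sup>2)"
proof -
  have "(norm (\<Sum>i<n. f i))\<^sup>2 \<le> (\<Sum>i<n. norm (f i))\<^sup>2"
    by (intro power_mono norm_sum) simp
  also have "\<dots> = (\<Sum>i<n. 1 * norm (f i))\<^sup>2" by simp
  also have "\<dots> \<le> (\<Sum>i<n. 1\<^sup>2) * (\<Sum>i<n. (norm (f i))\<^sup>2)"
    by (rule Cauchy_Schwarz_ineq_sum)
  finally show ?thesis by simp
qed

lemma norm_add_squared_le:
  fixes a b :: "'a::real_normed_vector"
  shows "(norm (a + b))\<^sup>2 \<le> 2 * (norm a)\<^sup>2 + 2 * (norm b)\<^sup>2"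
proof -
  have "(norm (a + b))\<^sup>2 \<le> (norm a + norm b)\<^sup>2"
    by (intro power_mono norm_triangle_ineq) simp
  also have "\<dots> \<le> 2 * (norm a)\<^sup>2 + 2 * (norm b)\<^sup>2"
    using zero_le_power2[of "norm a - norm b"] unfolding power2_sum power2_diff by linarith
  finally show ?thesis .
qed

lemma norm_sum_squared_eq:
  fixes f :: "nat \<Rightarrow> 'a::real_inner"
  shows "(norm (\<Sum>i<n. f i))\<^sup>2 = (\<Sum>i<n. \<Sum>i'<n. f i \<bullet> f i')"
  unfolding power2_norm_eq_inner by (simp only: inner_sum_left inner_sum_right, subst sum.swap, rule refl)

lemma borel_measurable_lipschitz:
  fixes g :: "'a::metric_space \<Rightarrow> 'b::real_normed_vector"
  assumes "\<And>u v. dist (g u) (g v) \<le> L * dist u v"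
  shows "g \<in> borel_measurable borel"
proof -
  have "(max L 0)-lipschitz_on UNIV g"
    by (rule lipschitz_onI, rule order_trans[OF assms]) (auto intro: mult_right_mono)
  then show ?thesis
    by (intro borel_measurable_continuous_onI lipschitz_on_continuous_on)
qed

lemma abs_diff_le_of_derivative_bound:
  fixes f f' :: "real \<Rightarrow> real"
  assumes "\<And>t. (f has_real_derivative f' t) (at t)"
    and "\<And>t. 0 \<le> t \<Longrightarrow> t \<le> 1 \<Longrightarrow> \<bar>f' t\<bar> \<le> c * t"
  shows "\<bar>f 1 - f 0\<bar> \<le> c / 2"
proof -
  have "((\<lambda>t. f t - c / 2 * t\<^sup>2) has_real_derivative f' t - c * t) (at t)"
    and "((\<lambda>t. f t + c / 2 * t\<^sup>2) has_real_derivative f' t + c * t) (at t)" for t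
    by (auto intro!: derivative_eq_intros assms(1))
  note derivs = this
  have "f 1 - c / 2 * 1\<^sup>2 \<le> f 0 - c / 2 * 0\<^sup>2"
  proof (rule DERIV_nonpos_imp_nonincreasing[of 0 1 "\<lambda>t. f t - c / 2 * t\<^sup>2"])
    fix t :: real assume "0 \<le> t" "t \<le> 1"
    then show "\<exists>y. ((\<lambda>t. f t - c / 2 * t\<^sup>2) has_real_derivative y) (at t) \<and> y \<le> 0"
      using assms(2)[of t] derivs[of t] by (auto simp: abs_le_iff)
  qed simp
  moreover have "f 0 + c / 2 * 0\<^sup>2 \<le> f 1 + c / 2 * 1\<^sup>2"
  proof (rule DERIV_nonneg_imp_nondecreasing[of 0 1 "\<lambda>t. f t + c / 2 * t\<^sup>2"])
    fix t :: real assume "0 \<le> t" "t \<le> 1"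
    then show "\<exists>y. ((\<lambda>t. f t + c / 2 * t\<^sup>2) has_real_derivative y) (at t) \<and> y \<ge> 0"
      using assms(2)[of t] derivs[of t] by (auto simp: abs_le_iff)
  qed simp
  ultimately show ?thesis unfolding abs_le_iff by simp
qed

section \<open>Square-integrable functions\<close>

definition square_integrable :: "'x measure \<Rightarrow> ('x \<Rightarrow> 'c::real_normed_vector) \<Rightarrow> bool" where
  "square_integrable M f \<longleftrightarrow> f \<in> borel_measurable M \<and> integrable M (\<lambda>x. (norm (f x))\<^sup>2)"

lemma square_integrable_measurable: "square_integrable M f \<Longrightarrow> f \<in> borel_measurable M"
  and integrable_norm_squared: "square_integrable M f \<Longrightarrow> integrable M (\<lambda>x. (norm (f x))\<^sup>2)"
  unfolding square_integrable_def by simp_all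

lemma integrable_inner_square_integrable:
  fixes f g :: "'x \<Rightarrow> 'c::euclidean_space"
  assumes "square_integrable M f" "square_integrable M g"
  shows "integrable M (\<lambda>x. f x \<bullet> g x)"
proof (rule Bochner_Integration.integrable_bound[where f="\<lambda>x. (norm (f x))\<^sup>2 + (norm (g x))\<^sup>2"])
  show "integrable M (\<lambda>x. (norm (f x))\<^sup>2 + (norm (g x))\<^sup>2)"
    using assms unfolding square_integrable_def by simp
  show "(\<lambda>x. f x \<bullet> g x) \<in> borel_measurable M"
    using assms unfolding square_integrable_def by (simp add: borel_measurable_inner)
  have "\<bar>f x \<bullet> g x\<bar> \<le> (norm (f x))\<^sup>2 + (norm (g x))\<^sup>2" for x
    using Cauchy_Schwarz_ineq2[of "f x" "g x"] zero_le_power2[of "norm (f x) - norm (g x)"]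
      mult_nonneg_nonneg[OF norm_ge_zero norm_ge_zero, of "f x" "g x"]
    unfolding power2_diff by linarith
  then show "AE x in M. norm (f x \<bullet> g x) \<le> norm ((norm (f x))\<^sup>2 + (norm (g x))\<^sup>2)"
    by simp
qed

lemma integral_norm_sum_squared_eq:
  fixes X :: "nat \<Rightarrow> 'x \<Rightarrow> 'c::euclidean_space"
  assumes X: "\<And>i. i < n \<Longrightarrow> square_integrable M (X i)"
  shows "(\<integral>x. (norm (\<Sum>i<n. X i x))\<^sup>2 \<partial>M) = (\<Sum>i<n. \<Sum>i'<n. \<integral>x. X i x \<bullet> X i' x \<partial>M)"
proof -
  have int: "integrable M (\<lambda>x. X i x \<bullet> X i' x)" if "i < n" "i' < n" for i i'
    using integrable_inner_square_integrable[OF X X] that .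
  have "(\<integral>x. (norm (\<Sum>i<n. X i x))\<^sup>2 \<partial>M) = (\<Sum>i<n. \<integral>x. (\<Sum>i'<n. X i x \<bullet> X i' x) \<partial>M)"
    unfolding norm_sum_squared_eq using int
    by (intro Bochner_Integration.integral_sum Bochner_Integration.integrable_sum) auto
  also have "\<dots> = (\<Sum>i<n. \<Sum>i'<n. \<integral>x. X i x \<bullet> X i' x \<partial>M)"
    using int by (intro sum.cong refl Bochner_Integration.integral_sum) auto
  finally show ?thesis .
qed

context finite_measure
begin

lemma square_integrable_integrable:
  fixes f :: "_ \<Rightarrow> 'c::{banach, second_countable_topology}"
  assumes "square_integrable M f"
  shows "integrable M f"
proof (rule Bochner_Integration.integrable_bound[where f="\<lambda>x. 1 + (norm (f x))\<^sup>2"])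
  show "integrable M (\<lambda>x. 1 + (norm (f x))\<^sup>2)" "f \<in> borel_measurable M"
    using assms unfolding square_integrable_def by auto
  have "t \<le> 1 + t\<^sup>2" for t :: real
  proof -
    have "2 * t \<le> t\<^sup>2 + 1"
      using zero_le_power2[of "t - 1"] unfolding power2_diff by simp
    then show ?thesis
      using zero_le_power2[of t] by linarith
  qed
  then show "AE x in M. norm (f x) \<le> norm (1 + (norm (f x))\<^sup>2)"
    by simp
qed

lemma square_integrable_const: "square_integrable M (\<lambda>x. c :: 'c::{banach, second_countable_topology})"
  unfolding square_integrable_def by simp

lemma square_integrable_add:
  fixes f g :: "_ \<Rightarrow> 'c::{banach, second_countable_topology}"
  assumes "square_integrable M f" "square_integrable M g"
  shows "square_integrable M (\<lambda>x. f x + g x)"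
  unfolding square_integrable_def
proof
  show meas: "(\<lambda>x. f x + g x) \<in> borel_measurable M"
    using assms unfolding square_integrable_def by (simp add: borel_measurable_add)
  show "integrable M (\<lambda>x. (norm (f x + g x))\<^sup>2)"
  proof (rule Bochner_Integration.integrable_bound[where f="\<lambda>x. 2 * (norm (f x))\<^sup>2 + 2 * (norm (g x))\<^sup>2"])
    show "integrable M (\<lambda>x. 2 * (norm (f x))\<^sup>2 + 2 * (norm (g x))\<^sup>2)"
      using assms unfolding square_integrable_def by simp
    show "AE x in M. norm ((norm (f x + g x))\<^sup>2) \<le> norm (2 * (norm (f x))\<^sup>2 + 2 * (norm (g x))\<^sup>2)"
      using norm_add_squared_le[of "f x" "g x" for x] by simp
  qed (use meas in simp)
qed

lemma square_integrable_scaleR: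
  fixes f :: "_ \<Rightarrow> 'c::{banach, second_countable_topology}"
  shows "square_integrable M f \<Longrightarrow> square_integrable M (\<lambda>x. c *\<^sub>R f x)"
  unfolding square_integrable_def by (simp add: power_mult_distrib borel_measurable_scaleR)

lemma square_integrable_diff:
  fixes f g :: "_ \<Rightarrow> 'c::{banach, second_countable_topology}"
  assumes "square_integrable M f" "square_integrable M g"
  shows "square_integrable M (\<lambda>x. f x - g x)"
  using square_integrable_add[OF assms(1) square_integrable_scaleR[OF assms(2), of "-1"]] by simp

lemma square_integrable_sum:
  fixes f :: "_ \<Rightarrow> _ \<Rightarrow> 'c::{banach, second_countable_topology}"
  shows "(\<And>i. i \<in> A \<Longrightarrow> square_integrable M (f i)) \<Longrightarrow> square_integrable M (\<lambda>x. \<Sum>i\<in>A. f i x)"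
proof (induction A rule: infinite_finite_induct)
  case (insert a A)
  then show ?case by (simp add: square_integrable_add)
qed (simp_all add: square_integrable_const)

lemma square_integrable_lipschitz_compose:
  fixes f :: "_ \<Rightarrow> 'c::{banach, second_countable_topology}"
    and g :: "'c \<Rightarrow> 'd::{banach, second_countable_topology}"
  assumes f: "square_integrable M f" and g: "\<And>u v. norm (g u - g v) \<le> L * norm (u - v)"
  shows "square_integrable M (\<lambda>x. g (f x))"
  unfolding square_integrable_def
proof
  have "g \<in> borel_measurable borel"
    by (rule borel_measurable_lipschitz) (use g in \<open>simp add: dist_norm\<close>)
  from measurable_compose[OF square_integrable_measurable[OF f] this]
  show meas: "(\<lambda>x. g (f x)) \<in> borel_measurable M" .
  have bound: "(norm (g (f x)))\<^sup>2 \<le> 2 * (norm (g 0))\<^sup>2 + 2 * L\<^sup>2 * (norm (f x))\<^sup>2" for x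
  proof -
    have "norm (g (f x)) \<le> norm (g 0) + L * norm (f x)"
      using g[of "f x" 0] norm_triangle_ineq2[of "g (f x)" "g 0"] by simp
    then have "(norm (g (f x)))\<^sup>2 \<le> (norm (g 0) + L * norm (f x))\<^sup>2"
      by (intro power_mono) simp_all
    also have "\<dots> \<le> 2 * (norm (g 0))\<^sup>2 + 2 * L\<^sup>2 * (norm (f x))\<^sup>2"
      using norm_add_squared_le[of "norm (g 0)" "L * norm (f x)"] by (simp add: power_mult_distrib)
    finally show ?thesis .
  qed
  show "integrable M (\<lambda>x. (norm (g (f x)))\<^sup>2)"
  proof (rule Bochner_Integration.integrable_bound)
    show "integrable M (\<lambda>x. 2 * (norm (g 0))\<^sup>2 + 2 * L\<^sup>2 * (norm (f x))\<^sup>2)"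
      using integrable_norm_squared[OF f] by simp
    show "(\<lambda>x. (norm (g (f x)))\<^sup>2) \<in> borel_measurable M"
      using meas by simp
    show "AE x in M. norm ((norm (g (f x)))\<^sup>2) \<le> norm (2 * (norm (g 0))\<^sup>2 + 2 * L\<^sup>2 * (norm (f x))\<^sup>2)"
      using bound by (intro AE_I2) (metis abs_of_nonneg norm_ge_zero order_trans real_norm_def zero_le_power2)
  qed
qed
end

context prob_space
begin

lemma norm_integral_squared_le:
  fixes f :: "_ \<Rightarrow> 'c::euclidean_space"
  assumes f: "square_integrable M f"
  shows "(norm (integral\<^sup>L M f))\<^sup>2 \<le> (\<integral>x. (norm (f x))\<^sup>2 \<partial>M)"
proof -
  define c where "c = integral\<^sup>L M f"
  have int_f: "integrable M f" by (rule square_integrable_integrable[OF f])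
  have expand: "(norm (f x - c))\<^sup>2 = ((norm (f x))\<^sup>2 - 2 * (f x \<bullet> c)) + (norm c)\<^sup>2" for x
    by (simp add: power2_norm_eq_inner inner_diff_left inner_diff_right inner_commute algebra_simps)
  have "0 \<le> (\<integral>x. (norm (f x - c))\<^sup>2 \<partial>M)"
    by simp
  also have "\<dots> = (\<integral>x. (norm (f x))\<^sup>2 \<partial>M) - 2 * (c \<bullet> c) + (norm c)\<^sup>2"
    unfolding expand using integrable_norm_squared[OF f] int_f prob_space
    by (simp add: c_def)
  finally show ?thesis
    unfolding c_def[symmetric] by (simp add: power2_norm_eq_inner)
qed

lemma integral_norm_sum_squared_le:
  fixes X :: "nat \<Rightarrow> _ \<Rightarrow> 'c::euclidean_space"
  assumes X: "\<And>i. i < n \<Longrightarrow> square_integrable M (X i)"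
  shows "(\<integral>x. (norm (\<Sum>i<n. X i x))\<^sup>2 \<partial>M) \<le> real n * (\<Sum>i<n. \<integral>x. (norm (X i x))\<^sup>2 \<partial>M)"
proof -
  have int: "i < n \<Longrightarrow> integrable M (\<lambda>x. (norm (X i x))\<^sup>2)" for i
    using integrable_norm_squared[OF X] .
  have "square_integrable M (\<lambda>x. \<Sum>i<n. X i x)"
    using X by (intro square_integrable_sum) auto
  then have "(\<integral>x. (norm (\<Sum>i<n. X i x))\<^sup>2 \<partial>M) \<le> (\<integral>x. real n * (\<Sum>i<n. (norm (X i x))\<^sup>2) \<partial>M)"
    using integrable_norm_squared int norm_sum_squared_le
    by (intro integral_mono integrable_mult_right Bochner_Integration.integrable_sum) auto
  also have "\<dots> = real n * (\<Sum>i<n. \<integral>x. (norm (X i x))\<^sup>2 \<partial>M)"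
    using int by (simp add: Bochner_Integration.integral_sum)
  finally show ?thesis .
qed

lemma integral_norm_sum_squared_uncorrelated_le:
  fixes X :: "nat \<Rightarrow> _ \<Rightarrow> 'c::euclidean_space"
  assumes X: "\<And>i. i < n \<Longrightarrow> square_integrable M (X i)"
    and uncorrelated: "\<And>i i'. i < n \<Longrightarrow> i' < n \<Longrightarrow> i \<noteq> i' \<Longrightarrow>
      (\<integral>x. X i x \<bullet> X i' x \<partial>M) = integral\<^sup>L M (X i) \<bullet> integral\<^sup>L M (X i')"
  shows "(\<integral>x. (norm (\<Sum>i<n. X i x))\<^sup>2 \<partial>M)
    \<le> (real n - 1) * (\<Sum>i<n. (norm (integral\<^sup>L M (X i)))\<^sup>2) + (\<Sum>i<n. \<integral>x. (norm (X i x))\<^sup>2 \<partial>M)"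
proof -
  define m where "m i = integral\<^sup>L M (X i)" for i
  have "(\<integral>x. (norm (\<Sum>i<n. X i x))\<^sup>2 \<partial>M) = (\<Sum>i<n. \<Sum>i'<n. \<integral>x. X i x \<bullet> X i' x \<partial>M)"
    by (rule integral_norm_sum_squared_eq[OF X])
  also have "\<dots> = (\<Sum>i<n. \<Sum>i'<n. m i \<bullet> m i' + (if i = i' then (\<integral>x. (norm (X i x))\<^sup>2 \<partial>M) - (norm (m i))\<^sup>2 else 0))"
    using uncorrelated unfolding m_def by (intro sum.cong refl) (auto simp: power2_norm_eq_inner)
  also have "\<dots> = (norm (\<Sum>i<n. m i))\<^sup>2 + (\<Sum>i<n. (\<integral>x. (norm (X i x))\<^sup>2 \<partial>M) - (norm (m i))\<^sup>2)"
    unfolding norm_sum_squared_eq by (simp add: sum.distrib)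
  also have "\<dots> \<le> real n * (\<Sum>i<n. (norm (m i))\<^sup>2) + (\<Sum>i<n. (\<integral>x. (norm (X i x))\<^sup>2 \<partial>M) - (norm (m i))\<^sup>2)"
    using norm_sum_squared_le by simp
  finally show ?thesis
    unfolding m_def by (simp add: sum_subtractf algebra_simps)
qed

end

section \<open>Functions with Lipschitz gradient\<close>

locale lipschitz_gradient =
  fixes F :: "'a::euclidean_space \<Rightarrow> real" and gradF :: "'a \<Rightarrow> 'a" and L :: real
  assumes has_derivative_F: "\<And>v. (F has_derivative (\<lambda>h. gradF v \<bullet> h)) (at v)"
    and lipschitz_gradF: "\<And>v v'. norm (gradF v - gradF v') \<le> L * norm (v - v')"
begin

lemma taylor_remainder_bound: "\<bar>F (w + d) - F w - gradF w \<bullet> d\<bar> \<le> L / 2 * (norm d)\<^sup>2"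
proof -
  define f where "f t = F (w + t *\<^sub>R d) - t * (gradF w \<bullet> d)" for t
  have "((\<lambda>t. w + t *\<^sub>R d) has_derivative (\<lambda>s. s *\<^sub>R d)) (at t)" for t
    by (auto intro!: derivative_eq_intros)
  from has_derivative_compose[OF this has_derivative_F]
  have "((\<lambda>t. F (w + t *\<^sub>R d)) has_real_derivative gradF (w + t *\<^sub>R d) \<bullet> d) (at t)" for t
    unfolding has_field_derivative_def by (simp add: mult.commute[of _ "gradF _ \<bullet> d"] fun_eq_iff)
  then have "(f has_real_derivative gradF (w + t *\<^sub>R d) \<bullet> d - gradF w \<bullet> d) (at t)" for t
    unfolding f_def by (auto intro!: derivative_eq_intros)
  moreover have "\<bar>gradF (w + t *\<^sub>R d) \<bullet> d - gradF w \<bullet> d\<bar> \<le> L * (norm d)\<^sup>2 * t" if "0 \<le> t" for t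
  proof -
    have "\<bar>(gradF (w + t *\<^sub>R d) - gradF w) \<bullet> d\<bar> \<le> norm (gradF (w + t *\<^sub>R d) - gradF w) * norm d"
      by (rule Cauchy_Schwarz_ineq2)
    also have "\<dots> \<le> L * norm (t *\<^sub>R d) * norm d"
      using lipschitz_gradF[of "w + t *\<^sub>R d" w] by (intro mult_right_mono) auto
    finally show ?thesis
      using that by (simp add: inner_diff_left power2_eq_square mult_ac)
  qed
  ultimately have "\<bar>f 1 - f 0\<bar> \<le> L * (norm d)\<^sup>2 / 2"
    by (rule abs_diff_le_of_derivative_bound)
  then show ?thesis
    unfolding f_def by (simp add: algebra_simps)
qed

lemma borel_measurable_F: "F \<in> borel_measurable borel"
  using has_derivative_F has_derivative_continuous
  by (intro borel_measurable_continuous_onI continuous_at_imp_continuous_on) blast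

lemma inner_gradient_ge:
  "((norm (gradF w))\<^sup>2 + (norm (gradF v))\<^sup>2 - L\<^sup>2 * (norm (v - w))\<^sup>2) / 2 \<le> gradF w \<bullet> gradF v"
proof -
  have "(norm (gradF w - gradF v))\<^sup>2 \<le> (L * norm (w - v))\<^sup>2"
    using lipschitz_gradF[of w v] by (intro power_mono) auto
  moreover have "(norm (gradF w - gradF v))\<^sup>2 = (norm (gradF w))\<^sup>2 + (norm (gradF v))\<^sup>2 - 2 * (gradF w \<bullet> gradF v)"
    by (simp add: power2_norm_eq_inner inner_diff_left inner_diff_right inner_commute)
  ultimately show ?thesis
    by (simp add: power_mult_distrib norm_minus_commute)
qed

lemma expected_descent:
  fixes d :: "'x \<Rightarrow> 'a"
  assumes M: "prob_space M" and d: "square_integrable M d" and L: "0 \<le> L"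
  shows "(\<integral>x. F (w + d x) \<partial>M) \<le> F w + gradF w \<bullet> integral\<^sup>L M d + L / 2 * (\<integral>x. (norm (d x))\<^sup>2 \<partial>M)"
proof -
  interpret prob_space M by (rule M)
  have int_d: "integrable M d"
    by (rule square_integrable_integrable[OF d])
  note int_d2 = integrable_norm_squared[OF d]
  have meas: "(\<lambda>x. F (w + d x)) \<in> borel_measurable M"
    using borel_measurable_F square_integrable_measurable[OF d] by measurable
  have bound: "\<bar>F (w + d x) - (F w + gradF w \<bullet> d x)\<bar> \<le> L / 2 * (norm (d x))\<^sup>2" for x
    using taylor_remainder_bound[of w "d x"] by (simp add: algebra_simps)
  have int_taylor: "integrable M (\<lambda>x. F w + gradF w \<bullet> d x + L / 2 * (norm (d x))\<^sup>2)"
    using int_d int_d2 by simp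
  have "integrable M (\<lambda>x. F (w + d x))"
  proof (rule Bochner_Integration.integrable_bound[where f="\<lambda>x. \<bar>F w\<bar> + \<bar>gradF w \<bullet> d x\<bar> + L / 2 * (norm (d x))\<^sup>2"])
    show "integrable M (\<lambda>x. \<bar>F w\<bar> + \<bar>gradF w \<bullet> d x\<bar> + L / 2 * (norm (d x))\<^sup>2)"
      using int_d int_d2 by (intro Bochner_Integration.integrable_add integrable_abs) auto
    have "\<bar>F (w + d x)\<bar> \<le> \<bar>F w\<bar> + \<bar>gradF w \<bullet> d x\<bar> + L / 2 * (norm (d x))\<^sup>2" for x
      using bound[of x] by linarith
    then show "AE x in M. norm (F (w + d x)) \<le> norm (\<bar>F w\<bar> + \<bar>gradF w \<bullet> d x\<bar> + L / 2 * (norm (d x))\<^sup>2)"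
      using L by (intro AE_I2) simp
  qed (rule meas)
  moreover have "F (w + d x) \<le> F w + gradF w \<bullet> d x + L / 2 * (norm (d x))\<^sup>2" for x
    using bound[of x] by linarith
  ultimately have "(\<integral>x. F (w + d x) \<partial>M) \<le> (\<integral>x. F w + gradF w \<bullet> d x + L / 2 * (norm (d x))\<^sup>2 \<partial>M)"
    using int_taylor by (intro integral_mono)
  also have "\<dots> = F w + gradF w \<bullet> integral\<^sup>L M d + L / 2 * (\<integral>x. (norm (d x))\<^sup>2 \<partial>M)"
    using int_d int_d2 prob_space by simp
  finally show ?thesis .
qed

end

section \<open>Finite products of a probability space\<close>

definition depends_on :: "'i set \<Rightarrow> (('i \<Rightarrow> 'b) \<Rightarrow> 'c) \<Rightarrow> bool" where
  "depends_on J f \<longleftrightarrow> (\<forall>x y. (\<forall>i\<in>J. x i = y i) \<longrightarrow> f x = f y)"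

lemma depends_on_mono: "depends_on J f \<Longrightarrow> J \<subseteq> J' \<Longrightarrow> depends_on J' f"
  unfolding depends_on_def by blast

lemma depends_on_comp: "depends_on J f \<Longrightarrow> depends_on J (\<lambda>x. g (f x))"
  unfolding depends_on_def by metis

lemma depends_on_restrict: "depends_on J f \<Longrightarrow> f (restrict x J) = f x"
  unfolding depends_on_def by auto

lemma depends_on_merge_left: "depends_on A f \<Longrightarrow> f (merge A J (x, y)) = f x"
  unfolding depends_on_def by (auto simp: merge_def)

lemma depends_on_merge_right: "depends_on J f \<Longrightarrow> f (merge (I - J) J (x, y)) = f y"
  unfolding depends_on_def by (simp add: merge_def)

context prob_space
begin

lemma product_prob_space_copies: "product_prob_space (\<lambda>_. M)"
  unfolding product_prob_space_def product_prob_space_axioms_def product_sigma_finite_def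
  using prob_space_axioms prob_space_imp_sigma_finite by auto

lemma measurable_PiM_depends_on:
  assumes "finite I" "J \<subseteq> I" "f \<in> borel_measurable (PiM I (\<lambda>_. M))" "depends_on J f"
  shows "f \<in> borel_measurable (PiM J (\<lambda>_. M))"
proof -
  have "prob_space (PiM (I - J) (\<lambda>_. M))"
    by (rule prob_space_PiM) (rule prob_space_axioms)
  then obtain x where x: "x \<in> space (PiM (I - J) (\<lambda>_. M))"
    by (meson ex_in_conv prob_space.not_empty)
  have I: "(I - J) \<union> J = I"
    using assms(2) by auto
  have "(\<lambda>y. merge (I - J) J (x, y)) \<in> measurable (PiM J (\<lambda>_. M)) (PiM I (\<lambda>_. M))"
    using measurable_comp[OF measurable_Pair1'[OF x] measurable_merge[of "I - J" J "\<lambda>_. M"]]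
    unfolding I comp_def .
  from measurable_comp[OF this assms(3)]
  have "(\<lambda>y. f (merge (I - J) J (x, y))) \<in> borel_measurable (PiM J (\<lambda>_. M))"
    by (simp add: comp_def)
  then show ?thesis
    by (simp add: depends_on_merge_right[OF assms(4)])
qed

lemma distr_PiM_restrict_copies:
  "finite I \<Longrightarrow> J \<subseteq> I \<Longrightarrow> distr (PiM I (\<lambda>_. M)) (PiM J (\<lambda>_. M)) (\<lambda>x. restrict x J) = PiM J (\<lambda>_. M)"
  using product_prob_space.distr_PiM_restrict_finite[OF product_prob_space_copies]
  by (auto dest: finite_subset)

lemma
  fixes f :: "_ \<Rightarrow> 'c::{banach, second_countable_topology}"
  assumes "finite I" "J \<subseteq> I" "f \<in> borel_measurable (PiM I (\<lambda>_. M))" "depends_on J f"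
  shows integrable_PiM_depends_on_iff:
      "integrable (PiM I (\<lambda>_. M)) f \<longleftrightarrow> integrable (PiM J (\<lambda>_. M)) f"
    and integral_PiM_depends_on: "integral\<^sup>L (PiM I (\<lambda>_. M)) f = integral\<^sup>L (PiM J (\<lambda>_. M)) f"
proof -
  note f = measurable_PiM_depends_on[OF assms]
  note restrict = measurable_restrict_subset[OF assms(2)]
  show "integrable (PiM I (\<lambda>_. M)) f \<longleftrightarrow> integrable (PiM J (\<lambda>_. M)) f"
    using integrable_distr_eq[OF restrict f] distr_PiM_restrict_copies[OF assms(1,2)]
    by (simp add: depends_on_restrict[OF assms(4)])
  show "integral\<^sup>L (PiM I (\<lambda>_. M)) f = integral\<^sup>L (PiM J (\<lambda>_. M)) f"
    using integral_distr[OF restrict f] distr_PiM_restrict_copies[OF assms(1,2)]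
    by (simp add: depends_on_restrict[OF assms(4)])
qed

lemma nn_integral_PiM_depends_on:
  assumes "finite I" "J \<subseteq> I" "f \<in> borel_measurable (PiM I (\<lambda>_. M))" "depends_on J f"
  shows "integral\<^sup>N (PiM I (\<lambda>_. M)) f = integral\<^sup>N (PiM J (\<lambda>_. M)) f"
proof -
  have "integral\<^sup>N (PiM J (\<lambda>_. M)) f = integral\<^sup>N (distr (PiM I (\<lambda>_. M)) (PiM J (\<lambda>_. M)) (\<lambda>x. restrict x J)) f"
    using distr_PiM_restrict_copies[OF assms(1,2)] by simp
  also have "\<dots> = integral\<^sup>N (PiM I (\<lambda>_. M)) (\<lambda>x. f (restrict x J))"
    using measurable_PiM_depends_on[OF assms] distr_PiM_restrict_copies[OF assms(1,2)]
    by (intro nn_integral_distr[OF measurable_restrict_subset[OF assms(2)]]) simp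
  finally show ?thesis
    using depends_on_restrict[OF assms(4)] by simp
qed

lemma
  fixes f :: "_ \<Rightarrow> 'c::{banach, second_countable_topology}"
  assumes "i \<in> I" "f \<in> borel_measurable M"
  shows integrable_PiM_component_iff: "integrable (PiM I (\<lambda>_. M)) (\<lambda>x. f (x i)) \<longleftrightarrow> integrable M f"
    and integral_PiM_component: "(\<integral>x. f (x i) \<partial>PiM I (\<lambda>_. M)) = integral\<^sup>L M f"
proof -
  have "distr (PiM I (\<lambda>_. M)) M (\<lambda>x. x i) = M"
    using distr_PiM_component[of I "\<lambda>_. M" i] prob_space_axioms assms(1) by simp
  moreover note component = measurable_component_singleton[OF assms(1), of "\<lambda>_. M"]
  ultimately show "integrable (PiM I (\<lambda>_. M)) (\<lambda>x. f (x i)) \<longleftrightarrow> integrable M f"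
    and "(\<integral>x. f (x i) \<partial>PiM I (\<lambda>_. M)) = integral\<^sup>L M f"
    using integrable_distr_eq[OF component assms(2)] integral_distr[OF component assms(2)] by simp_all
qed

lemma integral_PiM_split:
  fixes f :: "_ \<Rightarrow> 'c::{banach, second_countable_topology}"
  assumes "finite I" "J \<subseteq> I" "integrable (PiM I (\<lambda>_. M)) f"
  shows "integral\<^sup>L (PiM I (\<lambda>_. M)) f =
    (\<integral>x. (\<integral>y. f (merge (I - J) J (x, y)) \<partial>PiM J (\<lambda>_. M)) \<partial>PiM (I - J) (\<lambda>_. M))"
  using product_sigma_finite.product_integral_fold[of "\<lambda>_. M" "I - J" J f] assms
    product_prob_space_copies
  by (auto simp: Un_absorb2 product_prob_space_def dest: finite_subset)

lemma nn_integral_PiM_split: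
  assumes "finite I" "J \<subseteq> I" "f \<in> borel_measurable (PiM I (\<lambda>_. M))"
  shows "integral\<^sup>N (PiM I (\<lambda>_. M)) f =
    (\<integral>\<^sup>+x. (\<integral>\<^sup>+y. f (merge (I - J) J (x, y)) \<partial>PiM J (\<lambda>_. M)) \<partial>PiM (I - J) (\<lambda>_. M))"
  using product_sigma_finite.product_nn_integral_fold[of "\<lambda>_. M" "I - J" J f] assms
    product_prob_space_copies
  by (auto simp: Un_absorb2 product_prob_space_def dest: finite_subset)

lemma integral_inner_PiM_independent:
  fixes f g :: "_ \<Rightarrow> 'c::euclidean_space"
  assumes I: "finite I" "J\<^sub>1 \<subseteq> I" "J\<^sub>2 \<subseteq> I" "J\<^sub>1 \<inter> J\<^sub>2 = {}"
    and dep: "depends_on J\<^sub>1 f" "depends_on J\<^sub>2 g"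
    and f: "integrable (PiM I (\<lambda>_. M)) f" and g: "integrable (PiM I (\<lambda>_. M)) g"
    and fg: "integrable (PiM I (\<lambda>_. M)) (\<lambda>x. f x \<bullet> g x)"
  shows "(\<integral>x. f x \<bullet> g x \<partial>PiM I (\<lambda>_. M)) = integral\<^sup>L (PiM I (\<lambda>_. M)) f \<bullet> integral\<^sup>L (PiM I (\<lambda>_. M)) g"
proof -
  let ?A = "I - J\<^sub>2"
  have A: "?A \<subseteq> I" by auto
  have dep_f: "depends_on ?A f" using I by (intro depends_on_mono[OF dep(1)]) auto
  have "(\<integral>x. f x \<bullet> g x \<partial>PiM I (\<lambda>_. M)) = (\<integral>x. (\<integral>y. f x \<bullet> g y \<partial>PiM J\<^sub>2 (\<lambda>_. M)) \<partial>PiM ?A (\<lambda>_. M))"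
    using integral_PiM_split[OF I(1,3) fg] depends_on_merge_left[OF dep_f]
      depends_on_merge_right[OF dep(2)] by simp
  also have "\<dots> = integral\<^sup>L (PiM ?A (\<lambda>_. M)) f \<bullet> integral\<^sup>L (PiM J\<^sub>2 (\<lambda>_. M)) g"
    using f g integrable_PiM_depends_on_iff[OF I(1) A borel_measurable_integrable[OF f] dep_f]
      integrable_PiM_depends_on_iff[OF I(1,3) borel_measurable_integrable[OF g] dep(2)]
    by simp
  also have "\<dots> = integral\<^sup>L (PiM I (\<lambda>_. M)) f \<bullet> integral\<^sup>L (PiM I (\<lambda>_. M)) g"
    using integral_PiM_depends_on[OF I(1) A borel_measurable_integrable[OF f] dep_f]
      integral_PiM_depends_on[OF I(1,3) borel_measurable_integrable[OF g] dep(2)] by simp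
  finally show ?thesis .
qed

text \<open>Conditioning on the coordinates outside \<open>T\<close>: if \<open>V\<close> is determined by them and \<open>\<Phi> v\<close> only reads the
  coordinates in \<open>T\<close>, then \<open>\<Phi> v\<close> may be averaged over \<open>T\<close> for each frozen value \<open>v = V x\<close>.\<close>
lemma integral_PiM_condition:
  fixes \<Phi> :: "'v \<Rightarrow> _ \<Rightarrow> 'c::{banach, second_countable_topology}"
  assumes I: "finite I" "T \<subseteq> I"
    and dep: "depends_on (I - T) V" "\<And>v. depends_on T (\<Phi> v)"
    and int: "integrable (PiM I (\<lambda>_. M)) (\<lambda>x. \<Phi> (V x) x)" "integrable (PiM I (\<lambda>_. M)) (\<lambda>x. \<psi> (V x))"
    and \<psi>: "\<And>v. (\<integral>y. \<Phi> v y \<partial>PiM T (\<lambda>_. M)) = \<psi> v"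
  shows "(\<integral>x. \<Phi> (V x) x \<partial>PiM I (\<lambda>_. M)) = (\<integral>x. \<psi> (V x) \<partial>PiM I (\<lambda>_. M))"
proof -
  have "(\<integral>x. \<Phi> (V x) x \<partial>PiM I (\<lambda>_. M)) = (\<integral>x. (\<integral>y. \<Phi> (V x) y \<partial>PiM T (\<lambda>_. M)) \<partial>PiM (I - T) (\<lambda>_. M))"
    using integral_PiM_split[OF I int(1)] depends_on_merge_left[OF dep(1)]
      depends_on_merge_right[OF dep(2)] by simp
  also have "\<dots> = (\<integral>x. \<psi> (V x) \<partial>PiM I (\<lambda>_. M))"
    using \<psi> integral_PiM_depends_on[OF I(1) _ borel_measurable_integrable[OF int(2)] depends_on_comp[OF dep(1)]]
    by simp
  finally show ?thesis .
qed

lemma integral_PiM_condition_le: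
  fixes \<phi> :: "'v \<Rightarrow> _ \<Rightarrow> real"
  assumes I: "finite I" "T \<subseteq> I"
    and dep: "depends_on (I - T) V" "\<And>v. depends_on T (\<phi> v)"
    and meas: "(\<lambda>x. \<phi> (V x) x) \<in> borel_measurable (PiM I (\<lambda>_. M))"
    and int: "integrable (PiM I (\<lambda>_. M)) (\<lambda>x. \<psi> (V x))"
    and nonneg: "\<And>v y. 0 \<le> \<phi> v y"
    and \<phi>: "\<And>v. integrable (PiM T (\<lambda>_. M)) (\<phi> v)" "\<And>v. (\<integral>y. \<phi> v y \<partial>PiM T (\<lambda>_. M)) \<le> \<psi> v"
  shows "integrable (PiM I (\<lambda>_. M)) (\<lambda>x. \<phi> (V x) x)"
    and "(\<integral>x. \<phi> (V x) x \<partial>PiM I (\<lambda>_. M)) \<le> (\<integral>x. \<psi> (V x) \<partial>PiM I (\<lambda>_. M))"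
proof -
  have \<psi>_nonneg: "0 \<le> \<psi> v" for v
    using \<phi>(2)[of v] integral_nonneg_AE[of "\<phi> v"] nonneg by (meson AE_I2 order_trans)
  have "(\<integral>\<^sup>+x. \<phi> (V x) x \<partial>PiM I (\<lambda>_. M)) = (\<integral>\<^sup>+x. (\<integral>\<^sup>+y. \<phi> (V x) y \<partial>PiM T (\<lambda>_. M)) \<partial>PiM (I - T) (\<lambda>_. M))"
    using nn_integral_PiM_split[OF I, of "\<lambda>x. ennreal (\<phi> (V x) x)"] meas
      depends_on_merge_left[OF dep(1)] depends_on_merge_right[OF dep(2)] by simp
  also have "\<dots> \<le> (\<integral>\<^sup>+x. \<psi> (V x) \<partial>PiM (I - T) (\<lambda>_. M))"
    using \<phi> nonneg by (intro nn_integral_mono) (simp add: nn_integral_eq_integral ennreal_leI)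
  also have "\<dots> = (\<integral>\<^sup>+x. \<psi> (V x) \<partial>PiM I (\<lambda>_. M))"
    using nn_integral_PiM_depends_on[OF I(1) _ _ depends_on_comp[OF dep(1)], of "\<lambda>v. ennreal (\<psi> v)"]
      borel_measurable_integrable[OF int] by simp
  also have "\<dots> = ennreal (\<integral>x. \<psi> (V x) \<partial>PiM I (\<lambda>_. M))"
    using int \<psi>_nonneg by (intro nn_integral_eq_integral) auto
  finally have nn: "(\<integral>\<^sup>+x. \<phi> (V x) x \<partial>PiM I (\<lambda>_. M)) \<le> ennreal (\<integral>x. \<psi> (V x) \<partial>PiM I (\<lambda>_. M))" .
  show int_\<phi>: "integrable (PiM I (\<lambda>_. M)) (\<lambda>x. \<phi> (V x) x)"
    using meas nonneg le_less_trans[OF nn ennreal_less_top] by (intro integrableI_nonneg) auto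
  show "(\<integral>x. \<phi> (V x) x \<partial>PiM I (\<lambda>_. M)) \<le> (\<integral>x. \<psi> (V x) \<partial>PiM I (\<lambda>_. M))"
    using nn nn_integral_eq_integral[OF int_\<phi>] nonneg \<psi>_nonneg integral_nonneg_AE[of "\<lambda>x. \<psi> (V x)"]
    by (simp add: ennreal_le_iff)
qed

lemma square_integrable_PiM_component:
  fixes g :: "'a \<Rightarrow> 'c::{banach, second_countable_topology}"
  assumes g: "square_integrable M g" and i: "i \<in> I"
  shows "square_integrable (PiM I (\<lambda>_. M)) (\<lambda>y. g (y i))"
  unfolding square_integrable_def
  using integrable_PiM_component_iff[OF i, of "\<lambda>\<xi>. (norm (g \<xi>))\<^sup>2"] integrable_norm_squared[OF g]
    measurable_compose[OF measurable_component_singleton[OF i] square_integrable_measurable[OF g]]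
  by (simp add: square_integrable_measurable[OF g])

lemma integral_inner_PiM_components:
  fixes g :: "'a \<Rightarrow> 'c::euclidean_space"
  assumes g: "square_integrable M g" and I: "finite I" "i \<in> I" "i' \<in> I"
  shows "(\<integral>y. g (y i) \<bullet> g (y i') \<partial>PiM I (\<lambda>_. M)) =
    (if i = i' then \<integral>\<xi>. (norm (g \<xi>))\<^sup>2 \<partial>M else (norm (integral\<^sup>L M g))\<^sup>2)"
proof (cases "i = i'")
  case True
  then show ?thesis
    using integral_PiM_component[OF I(2), of "\<lambda>\<xi>. (norm (g \<xi>))\<^sup>2"] square_integrable_measurable[OF g]
    by (simp add: power2_norm_eq_inner)
next
  case False
  have g_meas: "g \<in> borel_measurable M"
    by (rule square_integrable_measurable[OF g])
  interpret PiM: prob_space "PiM I (\<lambda>_. M)"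
    by (rule prob_space_PiM) (rule prob_space_axioms)
  have "(\<integral>y. g (y i) \<bullet> g (y i') \<partial>PiM I (\<lambda>_. M)) =
      (\<integral>y. g (y i) \<partial>PiM I (\<lambda>_. M)) \<bullet> (\<integral>y. g (y i') \<partial>PiM I (\<lambda>_. M))"
    using I False square_integrable_PiM_component[OF g]
    by (intro integral_inner_PiM_independent[where J\<^sub>1="{i}" and J\<^sub>2="{i'}"]
        PiM.square_integrable_integrable integrable_inner_square_integrable)
      (auto simp: depends_on_def)
  also have "\<dots> = (norm (integral\<^sup>L M g))\<^sup>2"
    using integral_PiM_component[OF I(2) g_meas] integral_PiM_component[OF I(3) g_meas]
    by (simp add: power2_norm_eq_inner)
  finally show ?thesis
    using False by simp
qed

lemma minibatch_mean_moments:
  fixes g :: "'a \<Rightarrow> 'c::euclidean_space" and \<iota> :: "nat \<Rightarrow> 'i"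
  assumes g: "square_integrable M g" and n: "1 \<le> n" and \<iota>: "inj_on \<iota> {..<n}"
  defines "Y \<equiv> \<lambda>y. (1 / real n) *\<^sub>R (\<Sum>s<n. g (y (\<iota> s)))"
  shows "integral\<^sup>L (PiM (\<iota> ` {..<n}) (\<lambda>_. M)) Y = integral\<^sup>L M g"
    and "integrable (PiM (\<iota> ` {..<n}) (\<lambda>_. M)) (\<lambda>y. (norm (Y y))\<^sup>2)"
    and "(\<integral>y. (norm (Y y))\<^sup>2 \<partial>PiM (\<iota> ` {..<n}) (\<lambda>_. M)) =
      (norm (integral\<^sup>L M g))\<^sup>2 + ((\<integral>\<xi>. (norm (g \<xi>))\<^sup>2 \<partial>M) - (norm (integral\<^sup>L M g))\<^sup>2) / real n"
proof -
  let ?\<Pi> = "PiM (\<iota> ` {..<n}) (\<lambda>_. M)"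
  interpret \<Pi>: prob_space ?\<Pi>
    by (rule prob_space_PiM) (rule prob_space_axioms)
  have square_int: "square_integrable ?\<Pi> (\<lambda>y. g (y (\<iota> s)))" if "s < n" for s
    using that by (intro square_integrable_PiM_component[OF g]) simp
  have "square_integrable ?\<Pi> Y"
    unfolding Y_def using square_int by (intro \<Pi>.square_integrable_scaleR \<Pi>.square_integrable_sum) auto
  then show "integrable ?\<Pi> (\<lambda>y. (norm (Y y))\<^sup>2)"
    by (rule integrable_norm_squared)
  have "(\<integral>y. (norm (Y y))\<^sup>2 \<partial>?\<Pi>) = (1 / real n)\<^sup>2 * (\<integral>y. (norm (\<Sum>s<n. g (y (\<iota> s))))\<^sup>2 \<partial>?\<Pi>)"
    unfolding Y_def norm_scaleR by (simp add: power_mult_distrib power_divide)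
  also have "\<dots> = (1 / real n)\<^sup>2 * (\<Sum>s<n. \<Sum>s'<n. \<integral>y. g (y (\<iota> s)) \<bullet> g (y (\<iota> s')) \<partial>?\<Pi>)"
    using integral_norm_sum_squared_eq[OF square_int] by simp
  also have "\<dots> = (1 / real n)\<^sup>2 * (\<Sum>s<n. \<Sum>s'<n. (norm (integral\<^sup>L M g))\<^sup>2
      + (if s = s' then (\<integral>\<xi>. (norm (g \<xi>))\<^sup>2 \<partial>M) - (norm (integral\<^sup>L M g))\<^sup>2 else 0))"
    by (intro arg_cong2[where f="(*)"] sum.cong refl)
      (simp add: integral_inner_PiM_components[OF g] inj_on_eq_iff[OF \<iota>])
  also have "\<dots> = (norm (integral\<^sup>L M g))\<^sup>2 + ((\<integral>\<xi>. (norm (g \<xi>))\<^sup>2 \<partial>M) - (norm (integral\<^sup>L M g))\<^sup>2) / real n"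
    using n by (simp add: sum.distrib field_simps power2_eq_square)
  finally show "(\<integral>y. (norm (Y y))\<^sup>2 \<partial>?\<Pi>) =
      (norm (integral\<^sup>L M g))\<^sup>2 + ((\<integral>\<xi>. (norm (g \<xi>))\<^sup>2 \<partial>M) - (norm (integral\<^sup>L M g))\<^sup>2) / real n" .
  have "integral\<^sup>L ?\<Pi> Y = (1 / real n) *\<^sub>R (\<Sum>s<n. \<integral>y. g (y (\<iota> s)) \<partial>?\<Pi>)"
    unfolding Y_def using \<Pi>.square_integrable_integrable[OF square_int] by simp
  also have "(\<Sum>s<n. \<integral>y. g (y (\<iota> s)) \<partial>?\<Pi>) = (\<Sum>s<n. integral\<^sup>L M g)"
    by (intro sum.cong refl integral_PiM_component[OF _ square_integrable_measurable[OF g]]) simp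
  also have "(1 / real n) *\<^sub>R (\<Sum>s<n. integral\<^sup>L M g) = integral\<^sup>L M g"
    using n by (simp add: sum_constant_scaleR)
  finally show "integral\<^sup>L ?\<Pi> Y = integral\<^sup>L M g" .
qed
end

section \<open>The step size conditions\<close>

lemma sum_lessThan_real: "2 * (\<Sum>k<K. real k) = real K * (real K - 1)"
  by (induction K) (auto simp: algebra_simps)

lemma sum_lessThan_real_squared: "6 * (\<Sum>k<K. (real k)\<^sup>2) = (real K - 1) * real K * (2 * real K - 1)"
  by (induction K) (auto simp: algebra_simps power2_eq_square)

lemma sum_weighted_prefix_sums:
  fixes a u :: "nat \<Rightarrow> real"
  shows "(\<Sum>k<K. u k * (\<Sum>k'<k. a k')) = (\<Sum>k'<K. a k' * (\<Sum>k\<in>{k'<..<K}. u k))"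
proof (induction K)
  case (Suc K)
  have "{k'<..<Suc K} = insert K {k'<..<K}" if "k' < K" for k' using that by auto
  then have "(\<Sum>k'<K. a k' * (\<Sum>k\<in>{k'<..<Suc K}. u k)) = (\<Sum>k'<K. a k' * (\<Sum>k\<in>{k'<..<K}. u k) + a k' * u K)"
    by (intro sum.cong refl) (simp add: distrib_left)
  moreover have "{K<..<Suc K} = {}" by auto
  ultimately show ?case
    using Suc by (simp add: sum.distrib sum_distrib_left sum_distrib_right mult.commute)
qed simp

lemma sum_greaterThanLessThan_real_le:
  assumes "1 \<le> k'" "k' < K"
  shows "(\<Sum>k\<in>{k'<..<K}. real k) \<le> (real K + 1) * (real K - 2) / 2"
proof -
  have "(\<Sum>k\<in>{k'<..<K}. real k) \<le> (\<Sum>k\<in>{1<..<K}. real k)"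
    using assms by (intro sum_mono2) auto
  also have "{1<..<K} = {..<K} - {0, 1}"
    by auto
  also have "(\<Sum>k\<in>{..<K} - {0, 1}. real k) = (\<Sum>k<K. real k) - 1"
    using assms by (subst sum_diff) auto
  finally show ?thesis
    using sum_lessThan_real[of K] by (simp add: algebra_simps)
qed

text \<open>This is where the step size conditions enter: in the descent bound of one processor, the gradient
  at every local iterate after the first gets a nonpositive coefficient, and the gradient at the
  starting point one at most \<open>1 - \<delta>\<close>.\<close>
lemma kavg_coefficient_le:
  fixes L \<gamma> \<delta> :: real
  assumes step1: "1 \<ge> L\<^sup>2 * \<gamma>\<^sup>2 * (real K + 1) * (real K - 2) / 2 + L * \<gamma> * real K"
    and step2: "1 - \<delta> \<ge> L\<^sup>2 * \<gamma>\<^sup>2" and k': "k' < K"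
  shows "L\<^sup>2 * \<gamma>\<^sup>2 * (\<Sum>k\<in>{k'<..<K}. real k) - 1 + L * \<gamma> * real K \<le> (if k' = 0 then 1 - \<delta> else 0)"
proof (cases "k' = 0")
  case True
  have "{0<..<K} = {..<K} - {0}"
    by auto
  then have "(\<Sum>k\<in>{0<..<K}. real k) = real K * (real K - 1) / 2"
    using k' sum_lessThan_real[of K] by (simp add: sum_diff1)
  also have "\<dots> = (real K + 1) * (real K - 2) / 2 + 1"
    by (simp add: field_simps)
  moreover have "L\<^sup>2 * \<gamma>\<^sup>2 * ((real K + 1) * (real K - 2) / 2 + 1)
      = L\<^sup>2 * \<gamma>\<^sup>2 * (real K + 1) * (real K - 2) / 2 + L\<^sup>2 * \<gamma>\<^sup>2"
    by (simp add: algebra_simps)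
  ultimately show ?thesis
    using True step1 step2 by simp
next
  case False
  then have "L\<^sup>2 * \<gamma>\<^sup>2 * (\<Sum>k\<in>{k'<..<K}. real k) \<le> L\<^sup>2 * \<gamma>\<^sup>2 * ((real K + 1) * (real K - 2) / 2)"
    using k' by (intro mult_left_mono sum_greaterThanLessThan_real_le) auto
  then show ?thesis
    using False step1 by simp
qed

lemma weighted_kavg_coefficients_le:
  fixes a :: "nat \<Rightarrow> real" and L \<gamma> \<delta> :: real
  assumes K: "1 \<le> K" and a: "\<And>k. k < K \<Longrightarrow> 0 \<le> a k"
    and step1: "1 \<ge> L\<^sup>2 * \<gamma>\<^sup>2 * (real K + 1) * (real K - 2) / 2 + L * \<gamma> * real K"
    and step2: "1 - \<delta> \<ge> L\<^sup>2 * \<gamma>\<^sup>2"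
  shows "(\<Sum>k'<K. a k' * (L\<^sup>2 * \<gamma>\<^sup>2 * (\<Sum>k\<in>{k'<..<K}. real k) - 1 + L * \<gamma> * real K)) \<le> (1 - \<delta>) * a 0"
proof -
  have "(\<Sum>k'<K. a k' * (L\<^sup>2 * \<gamma>\<^sup>2 * (\<Sum>k\<in>{k'<..<K}. real k) - 1 + L * \<gamma> * real K))
      \<le> (\<Sum>k'<K. a k' * (if k' = 0 then 1 - \<delta> else 0))"
    using a kavg_coefficient_le[OF step1 step2] by (intro sum_mono mult_left_mono) auto
  also have "\<dots> = (1 - \<delta>) * a 0"
    using K by (subst sum.remove[of _ 0]) auto
  finally show ?thesis .
qed

text \<open>The descent contributed by one processor, where \<open>a k\<close> is the second moment of the gradient at the
  local iterate \<open>k\<close> and \<open>e k\<close> the mean squared distance of that iterate from the starting point.\<close>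
lemma local_steps_descent_bound:
  fixes a e :: "nat \<Rightarrow> real" and L \<gamma> \<delta> m :: real
  assumes K: "1 \<le> K" and \<gamma>: "0 < \<gamma>" and a: "\<And>k. k < K \<Longrightarrow> 0 \<le> a k"
    and e: "\<And>k. k < K \<Longrightarrow> e k \<le> \<gamma>\<^sup>2 * real k * (\<Sum>k'<k. a k' + m)"
    and step1: "1 \<ge> L\<^sup>2 * \<gamma>\<^sup>2 * (real K + 1) * (real K - 2) / 2 + L * \<gamma> * real K"
    and step2: "1 - \<delta> \<ge> L\<^sup>2 * \<gamma>\<^sup>2"
  shows "- (\<gamma> / 2) * (\<Sum>k<K. a 0 + a k - L\<^sup>2 * e k) + L * \<gamma>\<^sup>2 * real K / 2 * (\<Sum>k<K. a k)
    \<le> - ((real K - 1 + \<delta>) * \<gamma> / 2) * a 0 + L\<^sup>2 * \<gamma> ^ 3 * m / 2 * (\<Sum>k<K. (real k)\<^sup>2)"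
proof -
  define c where "c k' = (\<Sum>k\<in>{k'<..<K}. real k)" for k'
  have coefficients: "(\<Sum>k'<K. a k' * (L\<^sup>2 * \<gamma>\<^sup>2 * c k' - 1 + L * \<gamma> * real K)) \<le> (1 - \<delta>) * a 0"
    unfolding c_def by (rule weighted_kavg_coefficients_le[OF K a step1 step2])
  have "(\<Sum>k<K. real k * (\<Sum>k'<k. a k' + m)) = (\<Sum>k<K. real k * (\<Sum>k'<k. a k')) + m * (\<Sum>k<K. (real k)\<^sup>2)"
    by (simp add: sum.distrib sum_distrib_left distrib_left power2_eq_square mult_ac)
  also have "(\<Sum>k<K. real k * (\<Sum>k'<k. a k')) = (\<Sum>k'<K. a k' * c k')"
    unfolding c_def by (rule sum_weighted_prefix_sums)
  finally have drift: "(\<Sum>k<K. real k * (\<Sum>k'<k. a k' + m)) = (\<Sum>k'<K. a k' * c k') + m * (\<Sum>k<K. (real k)\<^sup>2)" .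
  have "(\<Sum>k<K. L\<^sup>2 * e k) \<le> (\<Sum>k<K. L\<^sup>2 * (\<gamma>\<^sup>2 * real k * (\<Sum>k'<k. a k' + m)))"
    using e by (intro sum_mono mult_left_mono) auto
  then have "real K * a 0 + (\<Sum>k<K. a k) - L\<^sup>2 * \<gamma>\<^sup>2 * (\<Sum>k<K. real k * (\<Sum>k'<k. a k' + m))
      \<le> (\<Sum>k<K. a 0 + a k - L\<^sup>2 * e k)"
    by (simp add: sum.distrib sum_subtractf sum_distrib_left mult.assoc)
  then have "- (\<gamma> / 2) * (\<Sum>k<K. a 0 + a k - L\<^sup>2 * e k)
      \<le> - (\<gamma> / 2) * (real K * a 0 + (\<Sum>k<K. a k) - L\<^sup>2 * \<gamma>\<^sup>2 * (\<Sum>k<K. real k * (\<Sum>k'<k. a k' + m)))"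
    using \<gamma> by (intro mult_left_mono_neg) auto
  also have "\<dots> = - (\<gamma> / 2) * real K * a 0 - L * \<gamma>\<^sup>2 * real K / 2 * (\<Sum>k<K. a k)
      + \<gamma> / 2 * (\<Sum>k'<K. a k' * (L\<^sup>2 * \<gamma>\<^sup>2 * c k' - 1 + L * \<gamma> * real K))
      + L\<^sup>2 * \<gamma> ^ 3 * m / 2 * (\<Sum>k<K. (real k)\<^sup>2)"
  proof -
    have coefficient_sum: "(\<Sum>k'<K. a k' * (L\<^sup>2 * \<gamma>\<^sup>2 * c k' - 1 + L * \<gamma> * real K))
        = L\<^sup>2 * \<gamma>\<^sup>2 * (\<Sum>k'<K. a k' * c k') - (\<Sum>k<K. a k) + L * \<gamma> * real K * (\<Sum>k<K. a k)"
      by (simp add: algebra_simps sum.distrib sum_subtractf sum_distrib_left)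
    show ?thesis
      unfolding drift coefficient_sum by (simp add: algebra_simps power2_eq_square power3_eq_cube)
  qed
  also have "\<dots> \<le> - (\<gamma> / 2) * real K * a 0 - L * \<gamma>\<^sup>2 * real K / 2 * (\<Sum>k<K. a k)
      + \<gamma> / 2 * ((1 - \<delta>) * a 0) + L\<^sup>2 * \<gamma> ^ 3 * m / 2 * (\<Sum>k<K. (real k)\<^sup>2)"
    using mult_left_mono[OF coefficients, of "\<gamma> / 2"] \<gamma> by simp
  moreover have "- (\<gamma> / 2) * real K * a 0 + \<gamma> / 2 * ((1 - \<delta>) * a 0) = - ((real K - 1 + \<delta>) * \<gamma> / 2) * a 0"
    by (simp add: field_simps)
  ultimately show ?thesis
    by linarith
qed

section \<open>One outer iteration of K-AVG\<close>

text \<open>\<open>\<Omega>\<close> is the joint distribution of all samples of the iteration started at \<open>w\<close>; \<open>iterate j k\<close> is the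
  local iterate \<open>w\<^sup>j\<^sub>n\<^sub>,\<^sub>k\<close> and \<open>stoch_grad j k\<close> the minibatch gradient with which processor \<open>j\<close> leaves it,
  computed from the samples \<open>(j, k + 1, s)\<close>, \<open>s < B\<close>.\<close>

locale kavg = lipschitz_gradient F gradF L
  for F :: "'a::euclidean_space \<Rightarrow> real" and gradF L +
  fixes D :: "'b measure" and G :: "'a \<Rightarrow> 'b \<Rightarrow> 'a"
    and M \<gamma> :: real and P K B :: nat and w :: 'a
  assumes prob_space_D: "prob_space D"
    and measurable_G: "(\<lambda>(v, \<xi>). G v \<xi>) \<in> borel_measurable (borel \<Otimes>\<^sub>M D)"
    and integrable_G_squared: "\<And>v. integrable D (\<lambda>\<xi>. (norm (G v \<xi>))\<^sup>2)"
    and unbiased: "\<And>v. (\<integral>\<xi>. G v \<xi> \<partial>D) = gradF v"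
    and variance: "\<And>v. (\<integral>\<xi>. (norm (G v \<xi>))\<^sup>2 \<partial>D) - (norm (\<integral>\<xi>. G v \<xi> \<partial>D))\<^sup>2 \<le> M"
    and L_nonneg: "0 \<le> L" and \<gamma>_pos: "0 < \<gamma>"
    and P: "1 \<le> P" and K: "1 \<le> K" and B: "1 \<le> B"
begin

sublocale D: prob_space D
  by (rule prob_space_D)

abbreviation "I \<equiv> kavg_index P K B"
abbreviation "\<Omega> \<equiv> PiM I (\<lambda>_. D)"

sublocale \<Omega>: prob_space \<Omega>
  by (rule prob_space_PiM) (rule prob_space_D)

definition iterate :: "nat \<Rightarrow> nat \<Rightarrow> (nat \<times> nat \<times> nat \<Rightarrow> 'b) \<Rightarrow> 'a" where
  "iterate j k x = kavg_local G \<gamma> B w x j k"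

definition batch :: "nat \<Rightarrow> nat \<Rightarrow> (nat \<times> nat \<times> nat) set" where
  "batch j k = (\<lambda>s. (j, Suc k, s)) ` {..<B}"

definition minibatch_grad :: "nat \<Rightarrow> nat \<Rightarrow> 'a \<Rightarrow> (nat \<times> nat \<times> nat \<Rightarrow> 'b) \<Rightarrow> 'a" where
  "minibatch_grad j k v x = (1 / real B) *\<^sub>R (\<Sum>s<B. G v (x (j, Suc k, s)))"

definition stoch_grad :: "nat \<Rightarrow> nat \<Rightarrow> (nat \<times> nat \<times> nat \<Rightarrow> 'b) \<Rightarrow> 'a" where
  "stoch_grad j k x = minibatch_grad j k (iterate j k x) x"

definition history :: "nat \<Rightarrow> nat \<Rightarrow> (nat \<times> nat \<times> nat) set" where
  "history j k = {j} \<times> {1..k} \<times> {..<B}"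

definition grad_moment :: "nat \<Rightarrow> nat \<Rightarrow> real" where
  "grad_moment j k = (\<integral>x. (norm (gradF (iterate j k x)))\<^sup>2 \<partial>\<Omega>)"

definition distance_moment :: "nat \<Rightarrow> nat \<Rightarrow> real" where
  "distance_moment j k = (\<integral>x. (norm (iterate j k x - w))\<^sup>2 \<partial>\<Omega>)"

lemma iterate_0: "iterate j 0 x = w"
  unfolding iterate_def by simp

lemma iterate_Suc: "iterate j (Suc k) x = iterate j k x - \<gamma> *\<^sub>R stoch_grad j k x"
  unfolding iterate_def stoch_grad_def minibatch_grad_def by (simp add: scaleR_scaleR)

lemma iterate_minus_start: "iterate j k x - w = - \<gamma> *\<^sub>R (\<Sum>k'<k. stoch_grad j k' x)"
  by (induction k) (simp_all add: iterate_0 iterate_Suc algebra_simps)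

definition grad_sum :: "nat \<Rightarrow> (nat \<times> nat \<times> nat \<Rightarrow> 'b) \<Rightarrow> 'a" where
  "grad_sum j x = (\<Sum>k<K. stoch_grad j k x)"

definition displacement :: "(nat \<times> nat \<times> nat \<Rightarrow> 'b) \<Rightarrow> 'a" where
  "displacement x = - (\<gamma> / real P) *\<^sub>R (\<Sum>j<P. grad_sum j x)"

lemma kavg_step_eq: "kavg_step G \<gamma> B K P w x = w + displacement x"
proof -
  have "(\<Sum>j<P. iterate j K x) = (\<Sum>j<P. w - \<gamma> *\<^sub>R (\<Sum>k<K. stoch_grad j k x))"
    using iterate_minus_start[of _ K x] by (intro sum.cong) (auto simp: algebra_simps)
  then show ?thesis
    using P unfolding kavg_step_def displacement_def grad_sum_def iterate_def[symmetric]
    by (simp add: sum_subtractf scaleR_sum_right scaleR_diff_right sum_constant_scaleR sum_negf)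
qed

lemma depends_on_step:
  assumes "depends_on (history j k) (iterate j k)"
  shows "depends_on (history j (Suc k)) (stoch_grad j k)"
    and "depends_on (history j (Suc k)) (iterate j (Suc k))"
proof -
  have stoch_grad_eq: "stoch_grad j k x = stoch_grad j k y" if "\<forall>i\<in>history j (Suc k). x i = y i" for x y
  proof -
    have "iterate j k x = iterate j k y"
      using assms that unfolding depends_on_def history_def by auto
    moreover have "x (j, Suc k, s) = y (j, Suc k, s)" if "s < B" for s
      using \<open>\<forall>i\<in>history j (Suc k). x i = y i\<close> that unfolding history_def by auto
    ultimately show ?thesis
      unfolding stoch_grad_def minibatch_grad_def by simp
  qed
  have iterate_eq: "iterate j k x = iterate j k y" if "\<forall>i\<in>history j (Suc k). x i = y i" for x y
    using assms that unfolding depends_on_def history_def by auto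
  show "depends_on (history j (Suc k)) (stoch_grad j k)"
    unfolding depends_on_def using stoch_grad_eq by blast
  show "depends_on (history j (Suc k)) (iterate j (Suc k))"
    unfolding depends_on_def iterate_Suc using stoch_grad_eq iterate_eq by metis
qed

lemma depends_on_iterate: "depends_on (history j k) (iterate j k)"
proof (induction k)
  case 0
  show ?case
    unfolding depends_on_def iterate_0 by simp
next
  case (Suc k)
  then show ?case
    by (rule depends_on_step(2))
qed

lemma depends_on_stoch_grad: "depends_on (history j (Suc k)) (stoch_grad j k)"
  using depends_on_step(1)[OF depends_on_iterate] .

lemma borel_measurable_stoch_grad:
  assumes "iterate j k \<in> borel_measurable \<Omega>" "j < P" "k < K"
  shows "stoch_grad j k \<in> borel_measurable \<Omega>"
proof -
  have "(\<lambda>x. G (iterate j k x) (x (j, Suc k, s))) \<in> borel_measurable \<Omega>" if "s < B" for s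
  proof -
    have "(j, Suc k, s) \<in> I"
      using assms(2,3) that by (auto simp: kavg_index_def)
    then have "(\<lambda>x. (iterate j k x, x (j, Suc k, s))) \<in> measurable \<Omega> (borel \<Otimes>\<^sub>M D)"
      by (intro measurable_Pair assms(1) measurable_component_singleton)
    from measurable_compose[OF this measurable_G] show ?thesis
      by simp
  qed
  then show ?thesis
    unfolding stoch_grad_def minibatch_grad_def by (intro borel_measurable_scaleR borel_measurable_sum) auto
qed

lemma finite_I: "finite I"
  unfolding kavg_index_def by simp

lemma square_integrable_G: "square_integrable D (G v)"
  unfolding square_integrable_def using measurable_Pair2[OF measurable_G, of v] integrable_G_squared by simp

lemma minibatch_grad_moments:
  shows "integral\<^sup>L (PiM (batch j k) (\<lambda>_. D)) (minibatch_grad j k v) = gradF v"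
    and "integrable (PiM (batch j k) (\<lambda>_. D)) (\<lambda>y. (norm (minibatch_grad j k v y))\<^sup>2)"
    and "(\<integral>y. (norm (minibatch_grad j k v y))\<^sup>2 \<partial>PiM (batch j k) (\<lambda>_. D)) \<le> (norm (gradF v))\<^sup>2 + M / real B"
proof -
  have inj: "inj_on (\<lambda>s. (j, Suc k, s)) {..<B}"
    by (simp add: inj_on_def)
  have eq: "(\<lambda>y. (1 / real B) *\<^sub>R (\<Sum>s<B. G v (y (j, Suc k, s)))) = minibatch_grad j k v"
    unfolding minibatch_grad_def ..
  note minibatch = D.minibatch_mean_moments[OF square_integrable_G[of v] B inj, folded batch_def, unfolded eq]
  show "integral\<^sup>L (PiM (batch j k) (\<lambda>_. D)) (minibatch_grad j k v) = gradF v"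
    using minibatch(1) unbiased by simp
  show "integrable (PiM (batch j k) (\<lambda>_. D)) (\<lambda>y. (norm (minibatch_grad j k v y))\<^sup>2)"
    using minibatch(2) unfolding minibatch_grad_def by simp
  have "((\<integral>\<xi>. (norm (G v \<xi>))\<^sup>2 \<partial>D) - (norm (gradF v))\<^sup>2) / real B \<le> M / real B"
    using variance[of v] B unfolding unbiased by (simp add: divide_right_mono)
  then show "(\<integral>y. (norm (minibatch_grad j k v y))\<^sup>2 \<partial>PiM (batch j k) (\<lambda>_. D)) \<le> (norm (gradF v))\<^sup>2 + M / real B"
    using minibatch(3) unfolding unbiased minibatch_grad_def by simp
qed

text \<open>The minibatch of step \<open>k + 1\<close> is independent of the iterate it is evaluated at, so the moments of
  \<open>stoch_grad j k\<close> are those of \<open>minibatch_grad j k v\<close> averaged over \<open>v = iterate j k x\<close>.\<close>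
lemma stoch_grad_moments:
  assumes j: "j < P" and k: "k < K" and iterate: "square_integrable \<Omega> (iterate j k)"
  shows "square_integrable \<Omega> (stoch_grad j k)"
    and "integral\<^sup>L \<Omega> (stoch_grad j k) = (\<integral>x. gradF (iterate j k x) \<partial>\<Omega>)"
    and "(\<integral>x. (norm (stoch_grad j k x))\<^sup>2 \<partial>\<Omega>) \<le> grad_moment j k + M / real B"
proof -
  have batch: "batch j k \<subseteq> I"
    using j k by (auto simp: batch_def kavg_index_def)
  have dep_iterate: "depends_on (I - batch j k) (iterate j k)"
    using depends_on_iterate by (rule depends_on_mono) (use j k in \<open>auto simp: history_def batch_def kavg_index_def\<close>)
  have dep_minibatch: "depends_on (batch j k) (minibatch_grad j k v)" for v
    unfolding depends_on_def minibatch_grad_def batch_def by auto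
  have square_int_gradF: "square_integrable \<Omega> (\<lambda>x. gradF (iterate j k x))"
    by (rule \<Omega>.square_integrable_lipschitz_compose[OF iterate lipschitz_gradF])
  have stoch_grad_eq: "stoch_grad j k = (\<lambda>x. minibatch_grad j k (iterate j k x) x)"
    by (simp add: fun_eq_iff stoch_grad_def)
  have meas: "stoch_grad j k \<in> borel_measurable \<Omega>"
    by (rule borel_measurable_stoch_grad[OF square_integrable_measurable[OF iterate] j k])
  then have meas_norm: "(\<lambda>x. (norm (minibatch_grad j k (iterate j k x) x))\<^sup>2) \<in> borel_measurable \<Omega>"
    unfolding stoch_grad_eq by simp
  have int_bound: "integrable \<Omega> (\<lambda>x. (norm (gradF (iterate j k x)))\<^sup>2 + M / real B)"
    using integrable_norm_squared[OF square_int_gradF] by simp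
  note conditioned = D.integral_PiM_condition_le[OF finite_I batch dep_iterate
      depends_on_comp[OF dep_minibatch, where g="\<lambda>u. (norm u)\<^sup>2"] meas_norm int_bound zero_le_power2
      minibatch_grad_moments(2,3)]
  have int: "integrable \<Omega> (\<lambda>x. (norm (stoch_grad j k x))\<^sup>2)"
    and second_moment: "(\<integral>x. (norm (stoch_grad j k x))\<^sup>2 \<partial>\<Omega>) \<le> grad_moment j k + M / real B"
    using conditioned integrable_norm_squared[OF square_int_gradF]
    by (simp_all add: stoch_grad_eq grad_moment_def \<Omega>.prob_space)
  show square_int: "square_integrable \<Omega> (stoch_grad j k)"
    unfolding square_integrable_def using meas int by simp
  show "(\<integral>x. (norm (stoch_grad j k x))\<^sup>2 \<partial>\<Omega>) \<le> grad_moment j k + M / real B"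
    by (rule second_moment)
  show "integral\<^sup>L \<Omega> (stoch_grad j k) = (\<integral>x. gradF (iterate j k x) \<partial>\<Omega>)"
    using \<Omega>.square_integrable_integrable[OF square_int] \<Omega>.square_integrable_integrable[OF square_int_gradF]
      minibatch_grad_moments(1)
    unfolding stoch_grad_eq by (intro D.integral_PiM_condition[OF finite_I batch dep_iterate dep_minibatch]) simp_all
qed

lemma square_integrable_iterate: "j < P \<Longrightarrow> k \<le> K \<Longrightarrow> square_integrable \<Omega> (iterate j k)"
proof (induction k)
  case 0
  show ?case
    unfolding iterate_0[abs_def] by (rule \<Omega>.square_integrable_const)
next
  case (Suc k)
  then have "square_integrable \<Omega> (iterate j k)" "square_integrable \<Omega> (stoch_grad j k)"
    using stoch_grad_moments(1) by auto
  then show ?case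
    unfolding iterate_Suc[abs_def] by (intro \<Omega>.square_integrable_diff \<Omega>.square_integrable_scaleR)
qed

lemma
  assumes "j < P" "k < K"
  shows square_integrable_stoch_grad: "square_integrable \<Omega> (stoch_grad j k)"
    and integral_stoch_grad: "integral\<^sup>L \<Omega> (stoch_grad j k) = (\<integral>x. gradF (iterate j k x) \<partial>\<Omega>)"
    and second_moment_stoch_grad_le: "(\<integral>x. (norm (stoch_grad j k x))\<^sup>2 \<partial>\<Omega>) \<le> grad_moment j k + M / real B"
  using stoch_grad_moments[OF assms square_integrable_iterate] assms by auto

lemma grad_moment_0: "grad_moment j 0 = (norm (gradF w))\<^sup>2"
  unfolding grad_moment_def iterate_0 by (simp add: \<Omega>.prob_space)

lemma grad_moment_nonneg: "0 \<le> grad_moment j k"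
  unfolding grad_moment_def by simp

lemma distance_moment_le:
  assumes j: "j < P" and k: "k \<le> K"
  shows "distance_moment j k \<le> \<gamma>\<^sup>2 * real k * (\<Sum>k'<k. grad_moment j k' + M / real B)"
proof -
  have "distance_moment j k = \<gamma>\<^sup>2 * (\<integral>x. (norm (\<Sum>k'<k. stoch_grad j k' x))\<^sup>2 \<partial>\<Omega>)"
    unfolding distance_moment_def iterate_minus_start by (simp add: power_mult_distrib)
  also have "\<dots> \<le> \<gamma>\<^sup>2 * (real k * (\<Sum>k'<k. \<integral>x. (norm (stoch_grad j k' x))\<^sup>2 \<partial>\<Omega>))"
    using j k square_integrable_stoch_grad by (intro mult_left_mono \<Omega>.integral_norm_sum_squared_le) auto
  also have "\<dots> \<le> \<gamma>\<^sup>2 * (real k * (\<Sum>k'<k. grad_moment j k' + M / real B))"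
    using j k second_moment_stoch_grad_le by (intro mult_left_mono sum_mono) auto
  finally show ?thesis
    by (simp add: mult.assoc)
qed

lemma inner_gradient_expectation_ge:
  assumes j: "j < P" and k: "k \<le> K"
  shows "((norm (gradF w))\<^sup>2 + grad_moment j k - L\<^sup>2 * distance_moment j k) / 2
    \<le> gradF w \<bullet> (\<integral>x. gradF (iterate j k x) \<partial>\<Omega>)"
proof -
  have square_int_gradF: "square_integrable \<Omega> (\<lambda>x. gradF (iterate j k x))"
    by (rule \<Omega>.square_integrable_lipschitz_compose[OF square_integrable_iterate[OF j k] lipschitz_gradF])
  have square_int_distance: "square_integrable \<Omega> (\<lambda>x. iterate j k x - w)"
    by (intro \<Omega>.square_integrable_diff square_integrable_iterate j k \<Omega>.square_integrable_const)
  have "((norm (gradF w))\<^sup>2 + grad_moment j k - L\<^sup>2 * distance_moment j k) / 2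
      = (\<integral>x. ((norm (gradF w))\<^sup>2 + (norm (gradF (iterate j k x)))\<^sup>2 - L\<^sup>2 * (norm (iterate j k x - w))\<^sup>2) / 2 \<partial>\<Omega>)"
    using integrable_norm_squared[OF square_int_gradF] integrable_norm_squared[OF square_int_distance]
    unfolding grad_moment_def distance_moment_def by (simp add: \<Omega>.prob_space)
  also have "\<dots> \<le> (\<integral>x. gradF w \<bullet> gradF (iterate j k x) \<partial>\<Omega>)"
    using integrable_norm_squared[OF square_int_gradF] integrable_norm_squared[OF square_int_distance]
      \<Omega>.square_integrable_integrable[OF square_int_gradF] inner_gradient_ge
    by (intro integral_mono) auto
  also have "\<dots> = gradF w \<bullet> (\<integral>x. gradF (iterate j k x) \<partial>\<Omega>)"
    using \<Omega>.square_integrable_integrable[OF square_int_gradF] by simp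
  finally show ?thesis .
qed

lemma
  assumes "j < P"
  shows square_integrable_grad_sum: "square_integrable \<Omega> (grad_sum j)"
    and integral_grad_sum: "integral\<^sup>L \<Omega> (grad_sum j) = (\<Sum>k<K. \<integral>x. gradF (iterate j k x) \<partial>\<Omega>)"
  using assms square_integrable_stoch_grad \<Omega>.square_integrable_integrable[OF square_integrable_stoch_grad]
    integral_stoch_grad
  unfolding grad_sum_def[abs_def] by (auto intro!: \<Omega>.square_integrable_sum simp: Bochner_Integration.integral_sum)

lemma depends_on_grad_sum: "depends_on (history j K) (grad_sum j)"
proof -
  have "depends_on (history j K) (stoch_grad j k)" if "k < K" for k
    using depends_on_stoch_grad by (rule depends_on_mono) (use that in \<open>auto simp: history_def\<close>)
  then have "grad_sum j x = grad_sum j y" if "\<forall>i\<in>history j K. x i = y i" for x y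
    using that unfolding grad_sum_def depends_on_def by (intro sum.cong refl) blast
  then show ?thesis
    unfolding depends_on_def by blast
qed

text \<open>Different processors use disjoint samples.\<close>
lemma integral_inner_grad_sum:
  assumes "j < P" "j' < P" "j \<noteq> j'"
  shows "(\<integral>x. grad_sum j x \<bullet> grad_sum j' x \<partial>\<Omega>) = integral\<^sup>L \<Omega> (grad_sum j) \<bullet> integral\<^sup>L \<Omega> (grad_sum j')"
  using assms \<Omega>.square_integrable_integrable[OF square_integrable_grad_sum]
    integrable_inner_square_integrable[OF square_integrable_grad_sum square_integrable_grad_sum]
  by (intro D.integral_inner_PiM_independent[OF finite_I _ _ _ depends_on_grad_sum depends_on_grad_sum])
    (auto simp: history_def kavg_index_def)

lemma norm_integral_grad_sum_squared_le:
  assumes j: "j < P"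
  shows "(norm (integral\<^sup>L \<Omega> (grad_sum j)))\<^sup>2 \<le> real K * (\<Sum>k<K. grad_moment j k)"
proof -
  have "(norm (integral\<^sup>L \<Omega> (grad_sum j)))\<^sup>2 \<le> real K * (\<Sum>k<K. (norm (\<integral>x. gradF (iterate j k x) \<partial>\<Omega>))\<^sup>2)"
    unfolding integral_grad_sum[OF j] by (rule norm_sum_squared_le)
  also have "\<dots> \<le> real K * (\<Sum>k<K. grad_moment j k)"
  proof (intro mult_left_mono sum_mono)
    fix k assume "k \<in> {..<K}"
    then have "square_integrable \<Omega> (\<lambda>x. gradF (iterate j k x))"
      using j by (intro \<Omega>.square_integrable_lipschitz_compose[OF square_integrable_iterate lipschitz_gradF]) auto
    then show "(norm (\<integral>x. gradF (iterate j k x) \<partial>\<Omega>))\<^sup>2 \<le> grad_moment j k"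
      unfolding grad_moment_def by (rule \<Omega>.norm_integral_squared_le)
  qed simp
  finally show ?thesis .
qed

lemma second_moment_grad_sum_le:
  assumes j: "j < P"
  shows "(\<integral>x. (norm (grad_sum j x))\<^sup>2 \<partial>\<Omega>) \<le> real K * (\<Sum>k<K. grad_moment j k) + (real K)\<^sup>2 * M / real B"
proof -
  have "(\<integral>x. (norm (grad_sum j x))\<^sup>2 \<partial>\<Omega>) \<le> real K * (\<Sum>k<K. \<integral>x. (norm (stoch_grad j k x))\<^sup>2 \<partial>\<Omega>)"
    unfolding grad_sum_def using j square_integrable_stoch_grad by (intro \<Omega>.integral_norm_sum_squared_le) auto
  also have "\<dots> \<le> real K * (\<Sum>k<K. grad_moment j k + M / real B)"
    using j second_moment_stoch_grad_le by (intro mult_left_mono sum_mono) auto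
  finally show ?thesis
    by (simp add: sum.distrib algebra_simps power2_eq_square)
qed

lemma square_integrable_displacement: "square_integrable \<Omega> displacement"
  unfolding displacement_def[abs_def] using square_integrable_grad_sum
  by (intro \<Omega>.square_integrable_scaleR \<Omega>.square_integrable_sum) auto

lemma first_order_term_le:
  "gradF w \<bullet> integral\<^sup>L \<Omega> displacement \<le>
    - (\<gamma> / (2 * real P)) * (\<Sum>j<P. \<Sum>k<K. (norm (gradF w))\<^sup>2 + grad_moment j k - L\<^sup>2 * distance_moment j k)"
proof -
  have "gradF w \<bullet> integral\<^sup>L \<Omega> displacement
      = - (\<gamma> / real P) * (\<Sum>j<P. \<Sum>k<K. gradF w \<bullet> (\<integral>x. gradF (iterate j k x) \<partial>\<Omega>))"
    unfolding displacement_def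
    using \<Omega>.square_integrable_integrable[OF square_integrable_grad_sum] integral_grad_sum
    by (simp add: Bochner_Integration.integral_sum inner_sum_right)
  also have "\<dots> \<le> - (\<gamma> / real P) *
      (\<Sum>j<P. \<Sum>k<K. ((norm (gradF w))\<^sup>2 + grad_moment j k - L\<^sup>2 * distance_moment j k) / 2)"
    using \<gamma>_pos P inner_gradient_expectation_ge by (intro mult_left_mono_neg sum_mono) auto
  finally show ?thesis
    by (simp add: sum_divide_distrib[symmetric])
qed

lemma second_order_term_le:
  "(\<integral>x. (norm (displacement x))\<^sup>2 \<partial>\<Omega>) \<le>
    \<gamma>\<^sup>2 * real K / real P * (\<Sum>j<P. \<Sum>k<K. grad_moment j k) + \<gamma>\<^sup>2 * (real K)\<^sup>2 * M / (real P * real B)"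
proof -
  have "(\<integral>x. (norm (displacement x))\<^sup>2 \<partial>\<Omega>) = (\<gamma> / real P)\<^sup>2 * (\<integral>x. (norm (\<Sum>j<P. grad_sum j x))\<^sup>2 \<partial>\<Omega>)"
    unfolding displacement_def by (simp add: power_mult_distrib power_divide)
  also have "\<dots> \<le> (\<gamma> / real P)\<^sup>2 * ((real P - 1) * (\<Sum>j<P. (norm (integral\<^sup>L \<Omega> (grad_sum j)))\<^sup>2)
      + (\<Sum>j<P. \<integral>x. (norm (grad_sum j x))\<^sup>2 \<partial>\<Omega>))"
    using square_integrable_grad_sum integral_inner_grad_sum
    by (intro mult_left_mono \<Omega>.integral_norm_sum_squared_uncorrelated_le) auto
  also have "\<dots> \<le> (\<gamma> / real P)\<^sup>2 * ((real P - 1) * (\<Sum>j<P. real K * (\<Sum>k<K. grad_moment j k))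
      + (\<Sum>j<P. real K * (\<Sum>k<K. grad_moment j k) + (real K)\<^sup>2 * M / real B))"
    using P norm_integral_grad_sum_squared_le second_moment_grad_sum_le
    by (intro mult_left_mono add_mono sum_mono) auto
  also have "\<dots> = \<gamma>\<^sup>2 * real K / real P * (\<Sum>j<P. \<Sum>k<K. grad_moment j k) + \<gamma>\<^sup>2 * (real K)\<^sup>2 * M / (real P * real B)"
    using P by (simp add: sum.distrib sum_distrib_left[symmetric] field_simps power2_eq_square)
  finally show ?thesis .
qed

lemma processors_descent_bound:
  fixes \<delta> :: real
  assumes step1: "1 \<ge> L\<^sup>2 * \<gamma>\<^sup>2 * (real K + 1) * (real K - 2) / 2 + L * \<gamma> * real K"
    and step2: "1 - \<delta> \<ge> L\<^sup>2 * \<gamma>\<^sup>2"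
  shows "(- (\<gamma> / 2) * (\<Sum>j<P. \<Sum>k<K. (norm (gradF w))\<^sup>2 + grad_moment j k - L\<^sup>2 * distance_moment j k)
      + L * \<gamma>\<^sup>2 * real K / 2 * (\<Sum>j<P. \<Sum>k<K. grad_moment j k)) / real P
    \<le> - ((real K - 1 + \<delta>) * \<gamma> / 2) * (norm (gradF w))\<^sup>2 + L\<^sup>2 * \<gamma> ^ 3 * (M / real B) / 2 * (\<Sum>k<K. (real k)\<^sup>2)"
    (is "(?S + ?A) / _ \<le> ?R")
proof -
  define \<Phi> where "\<Phi> j = - (\<gamma> / 2) * (\<Sum>k<K. (norm (gradF w))\<^sup>2 + grad_moment j k - L\<^sup>2 * distance_moment j k)
      + L * \<gamma>\<^sup>2 * real K / 2 * (\<Sum>k<K. grad_moment j k)" for j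
  have "\<Phi> j \<le> ?R" if "j < P" for j
    unfolding \<Phi>_def grad_moment_0[of j, symmetric]
    using that grad_moment_nonneg distance_moment_le
    by (intro local_steps_descent_bound[OF K \<gamma>_pos _ _ step1 step2]) auto
  then have "(\<Sum>j<P. \<Phi> j) \<le> real P * ?R"
    using sum_mono[of "{..<P}" \<Phi> "\<lambda>_. ?R"] by simp
  moreover have "(\<Sum>j<P. \<Phi> j) = ?S + ?A"
    unfolding \<Phi>_def by (simp add: sum.distrib sum_distrib_left)
  ultimately show ?thesis
    using P by (simp add: pos_divide_le_eq mult.commute)
qed

lemma expected_kavg_step_descent:
  fixes \<delta> :: real
  assumes step1: "1 \<ge> L\<^sup>2 * \<gamma>\<^sup>2 * (real K + 1) * (real K - 2) / 2 + L * \<gamma> * real K"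
    and step2: "1 - \<delta> \<ge> L\<^sup>2 * \<gamma>\<^sup>2"
  shows "(\<integral>x. F (kavg_step G \<gamma> B K P w x) \<partial>\<Omega>) - F w
    \<le> - ((real K - 1 + \<delta>) * \<gamma> / 2) * (norm (gradF w))\<^sup>2
      + L * \<gamma>\<^sup>2 * real K * M / (2 * real B) * (real K / real P + L * (2 * real K - 1) * (real K - 1) * \<gamma> / 6)"
proof -
  define S where "S = (\<Sum>j<P. \<Sum>k<K. (norm (gradF w))\<^sup>2 + grad_moment j k - L\<^sup>2 * distance_moment j k)"
  define A where "A = (\<Sum>j<P. \<Sum>k<K. grad_moment j k)"
  define R where "R = - ((real K - 1 + \<delta>) * \<gamma> / 2) * (norm (gradF w))\<^sup>2
    + L\<^sup>2 * \<gamma> ^ 3 * (M / real B) / 2 * (\<Sum>k<K. (real k)\<^sup>2)"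
  have processors: "(- (\<gamma> / 2) * S + L * \<gamma>\<^sup>2 * real K / 2 * A) / real P \<le> R"
    unfolding S_def A_def R_def by (rule processors_descent_bound[OF step1 step2])
  have "(\<integral>x. F (kavg_step G \<gamma> B K P w x) \<partial>\<Omega>) - F w
      \<le> gradF w \<bullet> integral\<^sup>L \<Omega> displacement + L / 2 * (\<integral>x. (norm (displacement x))\<^sup>2 \<partial>\<Omega>)"
    using expected_descent[OF \<Omega>.prob_space_axioms square_integrable_displacement L_nonneg, where w=w]
    unfolding kavg_step_eq by linarith
  also have "\<dots> \<le> - (\<gamma> / (2 * real P)) * S
      + L / 2 * (\<gamma>\<^sup>2 * real K / real P * A + \<gamma>\<^sup>2 * (real K)\<^sup>2 * M / (real P * real B))"
    unfolding S_def A_def using L_nonneg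
    by (intro add_mono first_order_term_le mult_left_mono second_order_term_le) simp_all
  also have "\<dots> = (- (\<gamma> / 2) * S + L * \<gamma>\<^sup>2 * real K / 2 * A) / real P
      + L * \<gamma>\<^sup>2 * (real K)\<^sup>2 * M / (2 * real P * real B)"
    using P B by (simp add: field_simps)
  also have "\<dots> \<le> R + L * \<gamma>\<^sup>2 * (real K)\<^sup>2 * M / (2 * real P * real B)"
    using processors by simp
  also have "\<dots> = - ((real K - 1 + \<delta>) * \<gamma> / 2) * (norm (gradF w))\<^sup>2
      + L * \<gamma>\<^sup>2 * real K * M / (2 * real B) * (real K / real P + L * (2 * real K - 1) * (real K - 1) * \<gamma> / 6)"
  proof -
    have squares: "(\<Sum>k<K. (real k)\<^sup>2) = (real K - 1) * real K * (2 * real K - 1) / 6"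
      using sum_lessThan_real_squared[of K] by simp
    show ?thesis
      unfolding R_def squares using P B by (simp add: field_simps power2_eq_square power3_eq_cube)
  qed
  finally show ?thesis .
qed

end

theorem mainTheorem6:
  fixes F :: "'a::euclidean_space \<Rightarrow> real" and gradF :: "'a \<Rightarrow> 'a"
    and D :: "'b measure" and G :: "'a \<Rightarrow> 'b \<Rightarrow> 'a"
    and L M \<gamma> \<delta> :: real and P K B :: nat and w :: 'a
  assumes probD: "prob_space D"
    and deriv: "\<And>v. (F has_derivative (\<lambda>h. gradF v \<bullet> h)) (at v)"
    and Lpos: "L > 0"
    and lip: "\<And>v v'. norm (gradF v - gradF v') \<le> L * norm (v - v')"
    and meas: "(\<lambda>(v, \<xi>). G v \<xi>) \<in> borel_measurable (borel \<Otimes>\<^sub>M D)"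
    and int1: "\<And>v. integrable D (G v)"
    and unbiased: "\<And>v. (\<integral>\<xi>. G v \<xi> \<partial>D) = gradF v"
    and int2: "\<And>v. integrable D (\<lambda>\<xi>. (norm (G v \<xi>))\<^sup>2)"
    and var: "\<And>v. (\<integral>\<xi>. (norm (G v \<xi>))\<^sup>2 \<partial>D) - (norm (\<integral>\<xi>. G v \<xi> \<partial>D))\<^sup>2 \<le> M"
    and Mnn: "M \<ge> 0"
    and P1: "P \<ge> 1" and K1: "K \<ge> 1" and B1: "B \<ge> 1"
    and gpos: "\<gamma> > 0"
    and dpos: "0 < \<delta>" and dlt1: "\<delta> < 1"
    and step1: "1 \<ge> L\<^sup>2 * \<gamma>\<^sup>2 * (real K + 1) * (real K - 2) / 2 + L * \<gamma> * real K"
    and step2: "1 - \<delta> \<ge> L\<^sup>2 * \<gamma>\<^sup>2"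
  shows "(\<integral>x. F (kavg_step G \<gamma> B K P w x) \<partial>(PiM (kavg_index P K B) (\<lambda>_. D))) - F w
           \<le> - ((real K - 1 + \<delta>) * \<gamma> / 2) * (norm (gradF w))\<^sup>2
              + L * \<gamma>\<^sup>2 * real K * M / (2 * real B)
                * (real K / real P + L * (2 * real K - 1) * (real K - 1) * \<gamma> / 6)"
proof -
  interpret kavg F gradF L D G M \<gamma> P K B w
    unfolding kavg_def kavg_axioms_def lipschitz_gradient_def
    using probD deriv lip meas unbiased int2 var less_imp_le[OF Lpos] P1 K1 B1 gpos by blast
  show ?thesis
    by (rule expected_kavg_step_descent[OF step1 step2])
qed

end
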